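(* Let $G=(V,E)$ be an undirected, unweighted graph with $n=|V|$ vertices. Let $\varepsilon\in(0,\frac{1}{18}]$ and suppose that $H$ is a $(1\pm\varepsilon)$-spectral sparsifier of $G$. Then $\widehat{H}$, the unweighted version of $H$, is an $\widetilde{O}(n^{2/3})$-spanner of $G$.
   Context: A $(1\pm\varepsilon)$-spectral sparsifier of $G$ is a weighted graph $H=(V,E_H,w)$ with $E_H\subseteq E$ and positive edge weights such that $(1-\varepsilon)L_H\preceq L_G\preceq(1+\varepsilon)L_H$, where $L_G=B_G^\top B_G$ is the Laplacian of $G$ ($B_G$ the edge–vertex incidence matrix), $L_H=B_H^\top W B_H$ with $W$ the diagonal matrix of edge weights, and $A\preceq B$ means $x^\top Ax\le x^\top Bx$ for all $x\in\mathbb{R}^n$. The unweighted version $\widehat{H}$ of $H$ is the graph $(V,E_H)$ with all edge weights set to $1$. A subgraph $K$ of $G$ is a $t$-spanner of $G$ if $d_K(u,v)\le t\cdot d_G(u,v)$ for all $u,v\in V$, where $d$ denotes shortest-path distance. $\widetilde{O}(f)$ means $f\cdot\mathrm{polylog}(n)$. *)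

theory Defs
  imports Complex_Main "HOL-Library.Extended_Real"
begin

definition simple_graph :: "'a set \<Rightarrow> 'a set set \<Rightarrow> bool" where
  "simple_graph V E \<longleftrightarrow> finite V \<and> (\<forall>e\<in>E. e \<subseteq> V \<and> card e = 2)"

text \<open>Weighted Laplacian matrix (entries indexed by vertices): L = B^T W B.
  For an unweighted graph take w = (\<lambda>_. 1).\<close>
definition laplacian :: "'a set set \<Rightarrow> ('a set \<Rightarrow> real) \<Rightarrow> 'a \<Rightarrow> 'a \<Rightarrow> real" where
  "laplacian E w u v =
     (if u = v then (\<Sum>e\<in>{e\<in>E. u \<in> e}. w e)
      else if {u, v} \<in> E then - w {u, v} else 0)"

definition quad_form :: "'a set \<Rightarrow> ('a \<Rightarrow> 'a \<Rightarrow> real) \<Rightarrow> ('a \<Rightarrow> real) \<Rightarrow> real" where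
  "quad_form V A x = (\<Sum>u\<in>V. \<Sum>v\<in>V. x u * A u v * x v)"

definition loewner_le :: "'a set \<Rightarrow> ('a \<Rightarrow> 'a \<Rightarrow> real) \<Rightarrow> ('a \<Rightarrow> 'a \<Rightarrow> real) \<Rightarrow> bool" where
  "loewner_le V A B \<longleftrightarrow> (\<forall>x. quad_form V A x \<le> quad_form V B x)"

definition spectral_sparsifier ::
  "real \<Rightarrow> 'a set \<Rightarrow> 'a set set \<Rightarrow> 'a set set \<Rightarrow> ('a set \<Rightarrow> real) \<Rightarrow> bool" where
  "spectral_sparsifier eps V E EH w \<longleftrightarrow>
     EH \<subseteq> E \<and> (\<forall>e\<in>EH. w e > 0) \<and>
     loewner_le V (\<lambda>u v. (1 - eps) * laplacian EH w u v) (laplacian E (\<lambda>_. 1)) \<and>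
     loewner_le V (laplacian E (\<lambda>_. 1)) (\<lambda>u v. (1 + eps) * laplacian EH w u v)"

definition is_walk :: "'a set set \<Rightarrow> 'a list \<Rightarrow> bool" where
  "is_walk E xs \<longleftrightarrow> xs \<noteq> [] \<and> (\<forall>i. Suc i < length xs \<longrightarrow> {xs ! i, xs ! Suc i} \<in> E)"

text \<open>Shortest-path distance (number of edges); \<infinity> if no path exists.\<close>
definition graph_dist :: "'a set set \<Rightarrow> 'a \<Rightarrow> 'a \<Rightarrow> ereal" where
  "graph_dist E u v =
     (INF xs \<in> {xs. is_walk E xs \<and> hd xs = u \<and> last xs = v}. ereal (real (length xs - 1)))"

definition is_spanner :: "real \<Rightarrow> 'a set \<Rightarrow> 'a set set \<Rightarrow> 'a set set \<Rightarrow> bool" where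
  "is_spanner t V E EK \<longleftrightarrow> EK \<subseteq> E \<and>
     (\<forall>u\<in>V. \<forall>v\<in>V. graph_dist EK u v \<le> ereal t * graph_dist E u v)"

end

theory Submission
  imports Defs
begin

(* Fix an edge {u, v} of G and let l be the breadth-first level from u in the unweighted
  sparsifier, truncated at K. Since l changes by at most one along sparsifier edges, every
  sparsifier edge crosses at most one threshold cut {l <= j}. Testing L_G <= (1 + eps) L_H with
  the vector counting the chosen thresholds below l, and (1 - eps) L_H <= L_G with each threshold
  indicator, gives (1 - eps) sum_e s_e^2 <= (1 + eps) sum_e s_e, where s_e counts the chosen
  thresholds separating the endpoints of e. Choose the thresholds j whose levels j and j + 1
  hold at most T = n^(1/3) vertices and which have a chosen neighbour threshold: then at most
  2nT edges have s_e = 1, which forces s_uv = O(T^2), while all but 1 + 3n/T thresholds below K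
  are chosen. Hence l(v) < K once K > 9 n^(2/3): every edge of G is stretched by at most
  9 n^(2/3) in the sparsifier. *)

section \<open>Laplacian quadratic forms\<close>

definition edge_energy :: "('a \<Rightarrow> real) \<Rightarrow> 'a set \<Rightarrow> real" where
  "edge_energy x e = (\<Sum>u\<in>e. \<Sum>v\<in>e. x u * (if u = v then 1 else -1) * x v)"

lemma edge_energy_doubleton: "a \<noteq> b \<Longrightarrow> edge_energy x {a, b} = (x a - x b)\<^sup>2"
  unfolding edge_energy_def by (simp add: power2_eq_square algebra_simps)

lemma laplacian_eq_sum_edges:
  assumes "finite E" and "\<forall>e\<in>E. card e = 2"
  shows "laplacian E w u v =
    (\<Sum>e\<in>E. w e * (if u \<in> e \<and> v \<in> e then if u = v then 1 else -1 else 0))"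
proof (cases "u = v")
  case True
  then show ?thesis
    unfolding laplacian_def by (simp add: sum.inter_filter assms(1) if_distrib cong: if_cong)
next
  case False
  have "{e\<in>E. u \<in> e \<and> v \<in> e} = E \<inter> {{u, v}}"
    using assms(2) False by (auto simp: card_2_iff)
  then have "(\<Sum>e\<in>E. w e * (if u \<in> e \<and> v \<in> e then -1 else 0)) = (\<Sum>e\<in>E \<inter> {{u, v}}. - w e)"
    by (simp add: sum.inter_filter[symmetric] assms(1) if_distrib cong: if_cong)
  then show ?thesis
    unfolding laplacian_def using False by (auto simp: Int_absorb1)
qed

lemma sum_sum_restrict:
  assumes "finite V" and "e \<subseteq> V"
  shows "(\<Sum>u\<in>V. \<Sum>v\<in>V. if u \<in> e \<and> v \<in> e then f u v else 0) = (\<Sum>u\<in>e. \<Sum>v\<in>e. f u v)"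
proof -
  have "(\<Sum>u\<in>V. \<Sum>v\<in>V. if u \<in> e \<and> v \<in> e then f u v else 0)
      = (\<Sum>u\<in>V. if u \<in> e then \<Sum>v\<in>V. if v \<in> e then f u v else 0 else 0)"
    by (intro sum.cong) auto
  also have "\<dots> = (\<Sum>u\<in>e. \<Sum>v\<in>e. f u v)"
    using assms by (simp add: sum.inter_restrict[symmetric] Int_absorb1)
  finally show ?thesis .
qed

lemma quad_form_laplacian:
  assumes "finite V" and "\<forall>e\<in>E. e \<subseteq> V \<and> card e = 2"
  shows "quad_form V (laplacian E w) x = (\<Sum>e\<in>E. w e * edge_energy x e)"
proof -
  have "finite E"
    using assms by (intro finite_subset[of E "Pow V"]) auto
  let ?c = "\<lambda>u v. x u * (if u = v then 1 else -1) * x v"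
  have lap: "laplacian E w u v =
      (\<Sum>e\<in>E. w e * (if u \<in> e \<and> v \<in> e then if u = v then 1 else -1 else 0))" for u v
    using assms(2) by (intro laplacian_eq_sum_edges \<open>finite E\<close>) blast
  have "quad_form V (laplacian E w) x
      = (\<Sum>u\<in>V. \<Sum>v\<in>V. \<Sum>e\<in>E. w e * (if u \<in> e \<and> v \<in> e then ?c u v else 0))"
    unfolding quad_form_def lap sum_distrib_left sum_distrib_right
    by (intro sum.cong refl) simp
  also have "\<dots> = (\<Sum>u\<in>V. \<Sum>e\<in>E. \<Sum>v\<in>V. w e * (if u \<in> e \<and> v \<in> e then ?c u v else 0))"
    by (rule sum.cong[OF refl], rule sum.swap)
  also have "\<dots> = (\<Sum>e\<in>E. \<Sum>u\<in>V. \<Sum>v\<in>V. w e * (if u \<in> e \<and> v \<in> e then ?c u v else 0))"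
    by (rule sum.swap)
  also have "\<dots> = (\<Sum>e\<in>E. w e * edge_energy x e)"
    using assms by (intro sum.cong refl)
      (simp add: sum_distrib_left[symmetric] sum_sum_restrict edge_energy_def)
  finally show ?thesis .
qed

lemma quad_form_scale: "quad_form V (\<lambda>u v. c * A u v) x = c * quad_form V A x"
  unfolding quad_form_def by (simp add: sum_distrib_left mult_ac)

lemma spectral_sparsifier_energy:
  assumes "simple_graph V E" and "spectral_sparsifier eps V E EH w"
  shows "(1 - eps) * (\<Sum>e\<in>EH. w e * edge_energy x e) \<le> (\<Sum>e\<in>E. edge_energy x e)"
    and "(\<Sum>e\<in>E. edge_energy x e) \<le> (1 + eps) * (\<Sum>e\<in>EH. w e * edge_energy x e)"
proof -
  have V: "finite V" "\<forall>e\<in>E. e \<subseteq> V \<and> card e = 2" "\<forall>e\<in>EH. e \<subseteq> V \<and> card e = 2"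
    using assms unfolding simple_graph_def spectral_sparsifier_def by auto
  from assms(2) have
    "loewner_le V (\<lambda>u v. (1 - eps) * laplacian EH w u v) (laplacian E (\<lambda>_. 1))"
    "loewner_le V (laplacian E (\<lambda>_. 1)) (\<lambda>u v. (1 + eps) * laplacian EH w u v)"
    unfolding spectral_sparsifier_def by simp_all
  then show "(1 - eps) * (\<Sum>e\<in>EH. w e * edge_energy x e) \<le> (\<Sum>e\<in>E. edge_energy x e)"
    and "(\<Sum>e\<in>E. edge_energy x e) \<le> (1 + eps) * (\<Sum>e\<in>EH. w e * edge_energy x e)"
    unfolding loewner_le_def quad_form_scale quad_form_laplacian[OF V(1,2)]
      quad_form_laplacian[OF V(1,3)] by simp_all
qed

section \<open>Threshold cuts of a level function\<close>

definition cut_count :: "('a \<Rightarrow> nat) \<Rightarrow> nat set \<Rightarrow> 'a set \<Rightarrow> nat" where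
  "cut_count l J e = card {j\<in>J. \<exists>p\<in>e. \<exists>q\<in>e. l p \<le> j \<and> j < l q}"

lemma cut_count_doubleton:
  assumes "l a \<le> l b"
  shows "cut_count l J {a, b} = card {j\<in>J. l a \<le> j \<and> j < l b}"
proof -
  have "{j\<in>J. \<exists>p\<in>{a, b}. \<exists>q\<in>{a, b}. l p \<le> j \<and> j < l q} = {j\<in>J. l a \<le> j \<and> j < l b}"
    using assms by auto
  then show ?thesis
    unfolding cut_count_def by simp
qed

lemma cut_count_le_one:
  assumes "l b \<le> l a + 1" and "l a \<le> l b + 1"
  shows "cut_count l J {a, b} \<le> 1"
proof -
  have "{j\<in>J. \<exists>p\<in>{a, b}. \<exists>q\<in>{a, b}. l p \<le> j \<and> j < l q} \<subseteq> {min (l a) (l b)}"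
    using assms by auto
  then have "card {j\<in>J. \<exists>p\<in>{a, b}. \<exists>q\<in>{a, b}. l p \<le> j \<and> j < l q} \<le> card {min (l a) (l b)}"
    by (intro card_mono) simp_all
  then show ?thesis
    unfolding cut_count_def by simp
qed

lemma sum_threshold_energy:
  assumes "finite J" and "a \<noteq> b"
  shows "(\<Sum>j\<in>J. edge_energy (\<lambda>z. if j < l z then 1 else 0) {a, b}) = real (cut_count l J {a, b})"
proof -
  have "edge_energy (\<lambda>z. if j < l z then 1 else 0) {a, b}
      = of_bool (\<exists>p\<in>{a, b}. \<exists>q\<in>{a, b}. l p \<le> j \<and> j < l q)" for j
    using assms(2) by (cases "j < l a"; cases "j < l b") (auto simp: edge_energy_doubleton)
  then show ?thesis
    using assms(1) by (simp add: cut_count_def Int_def conj_commute)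
qed

lemma threshold_count_energy:
  assumes "finite J" and "a \<noteq> b"
  shows "edge_energy (\<lambda>z. real (card {j\<in>J. j < l z})) {a, b} = (real (cut_count l J {a, b}))\<^sup>2"
proof -
  have ordered: "edge_energy (\<lambda>z. real (card {j\<in>J. j < l z})) {a, b} = (real (cut_count l J {a, b}))\<^sup>2"
    if "l a \<le> l b" "a \<noteq> b" for a b
  proof -
    have "{j\<in>J. j < l b} = {j\<in>J. j < l a} \<union> {j\<in>J. l a \<le> j \<and> j < l b}"
      using that by auto
    then have "card {j\<in>J. j < l b} = card {j\<in>J. j < l a} + card {j\<in>J. l a \<le> j \<and> j < l b}"
      using assms(1) by (simp add: card_Un_disjoint disjoint_iff)
    then show ?thesis
      using that by (simp add: edge_energy_doubleton cut_count_doubleton power2_commute)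
  qed
  show ?thesis
  proof (cases "l a \<le> l b")
    case True
    then show ?thesis using ordered assms(2) by blast
  next
    case False
    then show ?thesis using ordered[of b a] assms(2) by (simp add: insert_commute)
  qed
qed

lemma sparsifier_cut_count_inequality:
  assumes G: "simple_graph V E" and H: "spectral_sparsifier eps V E EH w"
    and "0 \<le> eps" "eps \<le> 1" and "finite J"
    and lipschitz: "\<And>a b. {a, b} \<in> EH \<Longrightarrow> l b \<le> l a + 1"
  shows "(1 - eps) * (\<Sum>e\<in>E. (real (cut_count l J e))\<^sup>2) \<le> (1 + eps) * (\<Sum>e\<in>E. real (cut_count l J e))"
proof -
  let ?s = "\<lambda>e. real (cut_count l J e)"
  let ?count = "\<lambda>z. real (card {j\<in>J. j < l z})"
  let ?step = "\<lambda>j z. if j < l z then 1 else 0 :: real"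
  have EH_E: "EH \<subseteq> E"
    using H unfolding spectral_sparsifier_def by blast
  have doubleton: "\<exists>a b. e = {a, b} \<and> a \<noteq> b" if "e \<in> E" for e
    using G that unfolding simple_graph_def by (auto simp: card_2_iff)
  have count_energy: "edge_energy ?count e = (?s e)\<^sup>2" if e: "e \<in> E" for e
  proof -
    obtain a b where "e = {a, b}" "a \<noteq> b"
      using doubleton[OF e] by blast
    then show ?thesis
      using threshold_count_energy[OF \<open>finite J\<close>] by simp
  qed
  have step_energy: "(\<Sum>j\<in>J. edge_energy (?step j) e) = ?s e" if e: "e \<in> E" for e
  proof -
    obtain a b where "e = {a, b}" "a \<noteq> b"
      using doubleton[OF e] by blast
    then show ?thesis
      using sum_threshold_energy[OF \<open>finite J\<close>] by simp
  qed
  have square_sparse: "(?s e)\<^sup>2 = ?s e" if e: "e \<in> EH" for e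
  proof -
    obtain a b where ab: "e = {a, b}" "a \<noteq> b"
      using doubleton EH_E e by blast
    have "cut_count l J e \<le> 1"
      unfolding ab using lipschitz e ab(1) by (intro cut_count_le_one) (auto simp: insert_commute)
    then show ?thesis
      by (cases "cut_count l J e") auto
  qed
  (* L_G <= (1 + eps) L_H is tested with ?count and (1 - eps) L_H <= L_G with every ?step j;
    the two meet on the edges of H, where ?s e is 0 or 1. *)
  have "(1 - eps) * (\<Sum>e\<in>E. (?s e)\<^sup>2) = (1 - eps) * (\<Sum>e\<in>E. edge_energy ?count e)"
    using count_energy by simp
  also have "\<dots> \<le> (1 - eps) * ((1 + eps) * (\<Sum>e\<in>EH. w e * edge_energy ?count e))"
    using spectral_sparsifier_energy(2)[OF G H] \<open>eps \<le> 1\<close> by (intro mult_left_mono) auto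
  also have "(\<Sum>e\<in>EH. w e * edge_energy ?count e) = (\<Sum>e\<in>EH. \<Sum>j\<in>J. w e * edge_energy (?step j) e)"
  proof (intro sum.cong refl)
    fix e assume e: "e \<in> EH"
    have "edge_energy ?count e = (?s e)\<^sup>2"
      using count_energy EH_E e by blast
    also have "\<dots> = ?s e"
      by (rule square_sparse[OF e])
    also have "\<dots> = (\<Sum>j\<in>J. edge_energy (?step j) e)"
      using step_energy EH_E e by auto
    finally show "w e * edge_energy ?count e = (\<Sum>j\<in>J. w e * edge_energy (?step j) e)"
      by (simp add: sum_distrib_left)
  qed
  also have "\<dots> = (\<Sum>j\<in>J. \<Sum>e\<in>EH. w e * edge_energy (?step j) e)"
    by (rule sum.swap)
  also have "(1 - eps) * ((1 + eps) * \<dots>)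
      = (1 + eps) * (\<Sum>j\<in>J. (1 - eps) * (\<Sum>e\<in>EH. w e * edge_energy (?step j) e))"
    by (simp add: sum_distrib_left mult_ac)
  also have "\<dots> \<le> (1 + eps) * (\<Sum>j\<in>J. \<Sum>e\<in>E. edge_energy (?step j) e)"
    using spectral_sparsifier_energy(1)[OF G H] \<open>0 \<le> eps\<close> by (intro mult_left_mono sum_mono) auto
  also have "(\<Sum>j\<in>J. \<Sum>e\<in>E. edge_energy (?step j) e) = (\<Sum>e\<in>E. \<Sum>j\<in>J. edge_energy (?step j) e)"
    by (rule sum.swap)
  also have "\<dots> = (\<Sum>e\<in>E. ?s e)"
    using step_energy by simp
  finally show ?thesis .
qed

lemma quadratic_excess_bound:
  fixes s :: "'e \<Rightarrow> nat"
  assumes "finite E" and "e0 \<in> E" and "0 \<le> eps" and "eps \<le> 1/3"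
    and "(1 - eps) * (\<Sum>e\<in>E. (real (s e))\<^sup>2) \<le> (1 + eps) * (\<Sum>e\<in>E. real (s e))"
  shows "(1 - eps) * (real (s e0))\<^sup>2 - (1 + eps) * real (s e0)
    \<le> 2 * eps * real (card {e\<in>E. s e = 1})"
proof -
  let ?g = "\<lambda>e. (1 - eps) * (real (s e))\<^sup>2 - (1 + eps) * real (s e)"
  let ?single = "\<lambda>e. of_bool (s e = 1) :: real"
  have g_lower: "- (2 * eps * ?single e) \<le> ?g e" for e
  proof (cases "s e \<le> 1")
    case True
    then show ?thesis
      using assms(3) by (cases "s e") auto
  next
    case False
    then have "(1 - eps) * 2 \<le> (1 - eps) * real (s e)"
      using assms(4) by (intro mult_left_mono) auto
    then have "0 \<le> real (s e) * ((1 - eps) * real (s e) - (1 + eps))"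
      using assms(4) by (intro mult_nonneg_nonneg) auto
    then show ?thesis
      using False by (simp add: power2_eq_square algebra_simps)
  qed
  have "(\<Sum>e\<in>E - {e0}. ?single e) \<le> (\<Sum>e\<in>E. ?single e)"
    using assms(1) by (intro sum_mono2) auto
  also have "\<dots> = real (card {e\<in>E. s e = 1})"
    using assms(1) by (simp add: Int_def)
  finally have "- (2 * eps * real (card {e\<in>E. s e = 1})) \<le> (\<Sum>e\<in>E - {e0}. - (2 * eps * ?single e))"
    using assms(3) by (simp add: sum_distrib_left[symmetric] sum_negf mult_left_mono)
  also have "\<dots> \<le> (\<Sum>e\<in>E - {e0}. ?g e)"
    by (intro sum_mono g_lower)
  also have "\<dots> = (\<Sum>e\<in>E. ?g e) - ?g e0"
    using sum.remove[OF assms(1,2), of ?g] by simp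
  also have "(\<Sum>e\<in>E. ?g e) \<le> 0"
    using assms(5) by (simp add: sum_subtractf sum_distrib_left)
  finally show ?thesis
    by linarith
qed

section \<open>Light cuts\<close>

definition nonisolated :: "nat set \<Rightarrow> nat set" where
  "nonisolated I = {j\<in>I. Suc j \<in> I \<or> (0 < j \<and> j - 1 \<in> I)}"

lemma nonisolated_subset: "nonisolated I \<subseteq> I"
  unfolding nonisolated_def by blast

lemma nonisolated_neighbour:
  assumes "j \<in> nonisolated I"
  shows "Suc j \<in> nonisolated I \<or> (0 < j \<and> j - 1 \<in> nonisolated I)"
  using assms unfolding nonisolated_def by auto

lemma card_nonisolated_ge:
  assumes "finite H" and "I \<subseteq> {..<K}"
    and dense: "\<And>j. j < K \<Longrightarrow> j \<notin> H \<Longrightarrow> Suc j \<notin> H \<Longrightarrow> j \<in> I"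
  shows "K \<le> card (nonisolated I) + 1 + 3 * card H"
proof -
  let ?near_H = "(\<lambda>(i, d). i - d) ` (H \<times> {..2})"
  have near: "j \<in> ?near_H" if "j + d \<in> H" "d \<le> 2" for j d
    using that by (intro image_eqI[where x = "(j + d, d)"]) auto
  have cover: "{..<K} \<subseteq> nonisolated I \<union> {K - 1} \<union> ?near_H"
  proof
    fix j assume j: "j \<in> {..<K}"
    show "j \<in> nonisolated I \<union> {K - 1} \<union> ?near_H"
    proof (cases "j \<in> H \<or> Suc j \<in> H \<or> Suc (Suc j) \<in> H")
      case True
      then show ?thesis
        using near[of j 0] near[of j 1] near[of j 2] by auto
    next
      case False
      then have "j \<in> I" and "Suc j < K \<Longrightarrow> Suc j \<in> I"
        using dense j by auto
      then show ?thesis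
        using j by (cases "Suc j < K") (auto simp: nonisolated_def)
    qed
  qed
  have "finite (nonisolated I)"
    by (rule finite_subset[OF subset_trans[OF nonisolated_subset assms(2)]]) simp
  then have "card {..<K} \<le> card (nonisolated I \<union> {K - 1} \<union> ?near_H)"
    using assms(1) by (intro card_mono[OF _ cover]) simp
  also have "\<dots> \<le> card (nonisolated I \<union> {K - 1}) + card ?near_H"
    by (rule card_Un_le)
  also have "\<dots> \<le> card (nonisolated I) + card {K - 1} + card (H \<times> {..2::nat})"
    using assms(1) by (intro add_mono card_Un_le card_image_le) simp
  finally show ?thesis
    by (simp add: card_cartesian_product)
qed

definition light_cuts :: "'a set \<Rightarrow> ('a \<Rightarrow> nat) \<Rightarrow> real \<Rightarrow> nat \<Rightarrow> nat set" where
  "light_cuts V l T K =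
     {j. j < K \<and> real (card {a\<in>V. l a = j}) \<le> T \<and> real (card {a\<in>V. l a = Suc j}) \<le> T}"

lemma heavy_levels:
  assumes "finite V" and "0 < T"
  shows "finite {j. T < real (card {a\<in>V. l a = j})}"
    and "real (card {j. T < real (card {a\<in>V. l a = j})}) \<le> real (card V) / T"
proof -
  let ?H = "{j. T < real (card {a\<in>V. l a = j})}"
  have "?H \<subseteq> l ` V"
  proof
    fix j assume "j \<in> ?H"
    then have "{a\<in>V. l a = j} \<noteq> {}"
      using assms(2) by (auto simp del: Collect_empty_eq)
    then show "j \<in> l ` V" by blast
  qed
  then show fin: "finite ?H"
    using assms(1) finite_surj by blast
  have "real (card ?H) * T = (\<Sum>j\<in>?H. T)"
    by simp
  also have "\<dots> \<le> (\<Sum>j\<in>?H. real (card {a\<in>V. l a = j}))"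
    by (intro sum_mono) simp
  also have "\<dots> = real (card (\<Union>j\<in>?H. {a\<in>V. l a = j}))"
    using fin assms(1) by (subst card_UN_disjoint) auto
  also have "\<dots> \<le> real (card V)"
    using assms(1) by (intro of_nat_mono card_mono) auto
  finally show "real (card ?H) \<le> real (card V) / T"
    using assms(2) by (simp add: pos_le_divide_eq)
qed

lemma card_nonisolated_light_cuts:
  assumes "finite V" and "0 < T"
  shows "real K \<le> real (card (nonisolated (light_cuts V l T K))) + 1 + 3 * (real (card V) / T)"
proof -
  let ?H = "{j. T < real (card {a\<in>V. l a = j})}"
  have "K \<le> card (nonisolated (light_cuts V l T K)) + 1 + 3 * card ?H"
    using heavy_levels(1)[OF assms] by (rule card_nonisolated_ge) (auto simp: light_cuts_def)
  then show ?thesis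
    using heavy_levels(2)[OF assms, of l] by linarith
qed

definition next_cut_layer :: "'a set \<Rightarrow> ('a \<Rightarrow> nat) \<Rightarrow> nat set \<Rightarrow> 'a \<Rightarrow> 'a set" where
  "next_cut_layer V l J a = {b\<in>V. \<exists>j\<in>J. l a \<le> j \<and> (\<forall>i\<in>J. l a \<le> i \<longrightarrow> j \<le> i) \<and> l b = Suc j}"

definition prev_cut_layer :: "'a set \<Rightarrow> ('a \<Rightarrow> nat) \<Rightarrow> nat set \<Rightarrow> 'a \<Rightarrow> 'a set" where
  "prev_cut_layer V l J b = {a\<in>V. \<exists>j\<in>J. j < l b \<and> (\<forall>i\<in>J. i < l b \<longrightarrow> i \<le> j) \<and> l a = j}"

lemma card_next_cut_layer:
  assumes "finite V" and "0 \<le> T"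
    and light: "\<And>j. j \<in> J \<Longrightarrow> real (card {b\<in>V. l b = Suc j}) \<le> T"
  shows "real (card (next_cut_layer V l J a)) \<le> T"
proof (cases "next_cut_layer V l J a = {}")
  case True
  then show ?thesis using assms(2) by simp
next
  case False
  then obtain j where j: "j \<in> J" "l a \<le> j" "\<forall>i\<in>J. l a \<le> i \<longrightarrow> j \<le> i"
    unfolding next_cut_layer_def by blast
  have "next_cut_layer V l J a \<subseteq> {b\<in>V. l b = Suc j}"
    using j unfolding next_cut_layer_def by (auto intro: antisym)
  then have "card (next_cut_layer V l J a) \<le> card {b\<in>V. l b = Suc j}"
    using assms(1) by (intro card_mono) simp_all
  then show ?thesis
    using light[OF j(1)] by linarith
qed

lemma card_prev_cut_layer:
  assumes "finite V" and "0 \<le> T"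
    and light: "\<And>j. j \<in> J \<Longrightarrow> real (card {a\<in>V. l a = j}) \<le> T"
  shows "real (card (prev_cut_layer V l J b)) \<le> T"
proof (cases "prev_cut_layer V l J b = {}")
  case True
  then show ?thesis using assms(2) by simp
next
  case False
  then obtain j where j: "j \<in> J" "j < l b" "\<forall>i\<in>J. i < l b \<longrightarrow> i \<le> j"
    unfolding prev_cut_layer_def by blast
  have "prev_cut_layer V l J b \<subseteq> {a\<in>V. l a = j}"
    using j unfolding prev_cut_layer_def by (auto intro: antisym)
  then have "card (prev_cut_layer V l J b) \<le> card {a\<in>V. l a = j}"
    using assms(1) by (intro card_mono) simp_all
  then show ?thesis
    using light[OF j(1)] by linarith
qed

lemma single_cut_edge_in_cut_layer:
  assumes neighbour: "\<And>j. j \<in> J \<Longrightarrow> Suc j \<in> J \<or> (0 < j \<and> j - 1 \<in> J)"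
    and "a \<in> V" "b \<in> V" "l a \<le> l b" and "cut_count l J {a, b} = 1"
  shows "b \<in> next_cut_layer V l J a \<or> a \<in> prev_cut_layer V l J b"
proof -
  obtain j where "{i\<in>J. l a \<le> i \<and> i < l b} = {j}"
    using assms(5) unfolding cut_count_doubleton[of l a b, OF assms(4)] by (rule card_1_singletonE)
  then have only: "i \<in> J \<and> l a \<le> i \<and> i < l b \<longleftrightarrow> i = j" for i
    by blast
  have j: "j \<in> J" "l a \<le> j" "j < l b"
    using only[of j] by simp_all
  from neighbour[OF j(1)] show ?thesis
  proof (elim disjE conjE)
    assume "Suc j \<in> J"
    then have "l b = Suc j"
      using j only[of "Suc j"] by auto
    moreover have "j \<le> i" if "i \<in> J" "l a \<le> i" for i
      using only[of i] that j by (cases "i < j") auto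
    ultimately show ?thesis
      using j assms(3) unfolding next_cut_layer_def by blast
  next
    assume "0 < j" "j - 1 \<in> J"
    then have "l a = j"
      using j only[of "j - 1"] by auto
    moreover have "i \<le> j" if "i \<in> J" "i < l b" for i
      using only[of i] that \<open>l a = j\<close> by (cases "j < i") auto
    ultimately show ?thesis
      using j assms(2) unfolding prev_cut_layer_def by blast
  qed
qed

lemma card_UN_image_le:
  assumes "finite V" and "\<And>a. a \<in> V \<Longrightarrow> finite (B a)"
    and "\<And>a. a \<in> V \<Longrightarrow> real (card (B a)) \<le> T"
  shows "real (card (\<Union>a\<in>V. f a ` B a)) \<le> real (card V) * T"
proof -
  have "card (\<Union>a\<in>V. f a ` B a) \<le> (\<Sum>a\<in>V. card (f a ` B a))"
    by (rule card_UN_le[OF assms(1)])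
  also have "\<dots> \<le> (\<Sum>a\<in>V. card (B a))"
    by (intro sum_mono card_image_le assms(2))
  finally have "real (card (\<Union>a\<in>V. f a ` B a)) \<le> (\<Sum>a\<in>V. real (card (B a)))"
    by (metis of_nat_le_iff of_nat_sum)
  also have "\<dots> \<le> (\<Sum>a\<in>V. T)"
    by (intro sum_mono assms(3))
  finally show ?thesis
    by simp
qed

lemma card_single_cut_edges:
  assumes "finite V" and E: "\<forall>e\<in>E. e \<subseteq> V \<and> card e = 2" and "0 \<le> T"
    and neighbour: "\<And>j. j \<in> J \<Longrightarrow> Suc j \<in> J \<or> (0 < j \<and> j - 1 \<in> J)"
    and light: "\<And>j. j \<in> J \<Longrightarrow> real (card {a\<in>V. l a = j}) \<le> T"
      "\<And>j. j \<in> J \<Longrightarrow> real (card {a\<in>V. l a = Suc j}) \<le> T"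
  shows "real (card {e\<in>E. cut_count l J e = 1}) \<le> 2 * real (card V) * T"
proof -
  let ?up = "\<Union>a\<in>V. (\<lambda>b. {a, b}) ` next_cut_layer V l J a"
  let ?down = "\<Union>b\<in>V. (\<lambda>a. {a, b}) ` prev_cut_layer V l J b"
  have fin: "finite (next_cut_layer V l J a)" "finite (prev_cut_layer V l J a)" for a
    using assms(1) unfolding next_cut_layer_def prev_cut_layer_def by simp_all
  have cover: "{e\<in>E. cut_count l J e = 1} \<subseteq> ?up \<union> ?down"
  proof
    fix e assume "e \<in> {e\<in>E. cut_count l J e = 1}"
    then have "e \<in> E" and single: "cut_count l J e = 1"
      by simp_all
    then obtain x y where xy: "e = {x, y}"
      using E by (meson card_2_iff)
    then have V: "x \<in> V" "y \<in> V"
      using E \<open>e \<in> E\<close> by auto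
    show "e \<in> ?up \<union> ?down"
    proof (cases "l x \<le> l y")
      case True
      then show ?thesis
        using single_cut_edge_in_cut_layer[OF neighbour V True] single V xy by blast
    next
      case False
      then have "l y \<le> l x" by simp
      moreover have "e = {y, x}"
        using xy by blast
      ultimately show ?thesis
        using single_cut_edge_in_cut_layer[OF neighbour V(2,1)] single V by blast
    qed
  qed
  have "card {e\<in>E. cut_count l J e = 1} \<le> card (?up \<union> ?down)"
    using assms(1) fin by (intro card_mono[OF _ cover]) simp
  also have "\<dots> \<le> card ?up + card ?down"
    by (rule card_Un_le)
  moreover have "real (card ?up) \<le> real (card V) * T"
    using card_next_cut_layer[OF assms(1,3) light(2)] by (intro card_UN_image_le[OF assms(1) fin(1)])
  moreover have "real (card ?down) \<le> real (card V) * T"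
    using card_prev_cut_layer[OF assms(1,3) light(1)] by (intro card_UN_image_le[OF assms(1) fin(2)])
  ultimately show ?thesis
    by linarith
qed

section \<open>Walks and truncated breadth-first levels\<close>

lemma is_walk_Nil [simp]: "\<not> is_walk E []"
  unfolding is_walk_def by simp

lemma is_walk_singleton [simp]: "is_walk E [x]"
  unfolding is_walk_def by simp

lemma is_walk_Cons_Cons [simp]:
  "is_walk E (x # y # xs) \<longleftrightarrow> {x, y} \<in> E \<and> is_walk E (y # xs)"
proof
  assume w: "is_walk E (x # y # xs)"
  have step: "{(x # y # xs) ! i, (x # y # xs) ! Suc i} \<in> E" if "Suc i < length (x # y # xs)" for i
    using w that unfolding is_walk_def by blast
  show "{x, y} \<in> E \<and> is_walk E (y # xs)"
    using step[of 0] step[of "Suc _"] unfolding is_walk_def by auto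
next
  assume "{x, y} \<in> E \<and> is_walk E (y # xs)"
  then show "is_walk E (x # y # xs)"
    unfolding is_walk_def by (auto simp: less_Suc_eq_0_disj)
qed

lemma is_walk_append:
  "is_walk E xs \<Longrightarrow> is_walk E ys \<Longrightarrow> last xs = hd ys \<Longrightarrow> is_walk E (xs @ tl ys)"
proof (induction xs rule: induct_list012)
  case (2 x)
  then show ?case by (cases ys) auto
next
  case (3 x y zs)
  then show ?case by simp
qed simp

definition reachable_within :: "'a set set \<Rightarrow> nat \<Rightarrow> 'a \<Rightarrow> 'a \<Rightarrow> bool" where
  "reachable_within E k u v \<longleftrightarrow> (\<exists>xs. is_walk E xs \<and> hd xs = u \<and> last xs = v \<and> length xs \<le> k + 1)"

lemma reachable_within_refl: "reachable_within E 0 u u"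
  unfolding reachable_within_def by (intro exI[of _ "[u]"]) simp

lemma reachable_within_edge: "{u, v} \<in> E \<Longrightarrow> reachable_within E 1 u v"
  unfolding reachable_within_def by (intro exI[of _ "[u, v]"]) simp

lemma reachable_within_mono: "reachable_within E k u v \<Longrightarrow> k \<le> k' \<Longrightarrow> reachable_within E k' u v"
  unfolding reachable_within_def by fastforce

lemma reachable_within_trans:
  assumes "reachable_within E k u v" and "reachable_within E k' v w"
  shows "reachable_within E (k + k') u w"
proof -
  obtain xs ys where xs: "is_walk E xs" "hd xs = u" "last xs = v" "length xs \<le> k + 1"
    and ys: "is_walk E ys" "hd ys = v" "last ys = w" "length ys \<le> k' + 1"
    using assms unfolding reachable_within_def by blast
  have "xs \<noteq> []" "ys \<noteq> []"
    using xs(1) ys(1) by auto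
  then have "hd (xs @ tl ys) = u" "last (xs @ tl ys) = w" "length (xs @ tl ys) \<le> k + k' + 1"
    using xs ys by (auto simp: last_append last_tl neq_Nil_conv)
  moreover have "is_walk E (xs @ tl ys)"
    using xs ys by (intro is_walk_append) simp_all
  ultimately show ?thesis
    unfolding reachable_within_def by blast
qed

definition capped_level :: "'a set set \<Rightarrow> 'a \<Rightarrow> nat \<Rightarrow> 'a \<Rightarrow> nat" where
  "capped_level E u K v = (LEAST k. k = K \<or> reachable_within E k u v)"

lemma capped_level_le: "capped_level E u K v \<le> K"
  unfolding capped_level_def by (rule Least_le) simp

lemma capped_level_reachable:
  "capped_level E u K v < K \<Longrightarrow> reachable_within E (capped_level E u K v) u v"
  unfolding capped_level_def by (metis (mono_tags, lifting) LeastI less_irrefl)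

lemma capped_level_self: "capped_level E u K u = 0"
  unfolding capped_level_def by (intro Least_eq_0) (simp add: reachable_within_refl)

lemma capped_level_lipschitz:
  assumes "{a, b} \<in> E"
  shows "capped_level E u K b \<le> capped_level E u K a + 1"
proof (cases "capped_level E u K a < K")
  case True
  then have "reachable_within E (capped_level E u K a + 1) u b"
    using reachable_within_trans[OF capped_level_reachable reachable_within_edge[OF assms]] by blast
  then show ?thesis
    unfolding capped_level_def by (intro Least_le) simp
next
  case False
  then show ?thesis
    using capped_level_le[of E u K b] by simp
qed

lemma reachable_within_lift:
  assumes edge: "\<And>x y. {x, y} \<in> E \<Longrightarrow> reachable_within EH B x y"
  shows "is_walk E ys \<Longrightarrow> reachable_within EH (B * (length ys - 1)) (hd ys) (last ys)"
proof (induction ys rule: induct_list012)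
  case (2 x)
  then show ?case by (simp add: reachable_within_refl)
next
  case (3 x y zs)
  then have "{x, y} \<in> E" and "reachable_within EH (B * (length (y # zs) - 1)) y (last (y # zs))"
    by simp_all
  then have "reachable_within EH (B + B * (length (y # zs) - 1)) x (last (y # zs))"
    by (rule reachable_within_trans[OF edge])
  then show ?case by simp
qed simp

lemma graph_dist_le_reachable: "reachable_within E k u v \<Longrightarrow> graph_dist E u v \<le> ereal (real k)"
  unfolding reachable_within_def graph_dist_def by (auto intro!: INF_lower2)

lemma graph_dist_attained:
  assumes "graph_dist E u v \<noteq> \<infinity>"
  obtains xs where "is_walk E xs" "hd xs = u" "last xs = v"
    "graph_dist E u v = ereal (real (length xs - 1))"
proof -
  let ?S = "{xs. is_walk E xs \<and> hd xs = u \<and> last xs = v}"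
  have "?S \<noteq> {}"
  proof
    assume empty: "?S = {}"
    have "graph_dist E u v = \<infinity>"
      unfolding graph_dist_def empty by (simp add: top_ereal_def)
    with assms show False ..
  qed
  then obtain ys where ys: "ys \<in> ?S" and shortest: "\<And>zs. zs \<in> ?S \<Longrightarrow> length ys \<le> length zs"
    using ex_has_least_nat[of "\<lambda>zs. zs \<in> ?S" _ length] by blast
  have "graph_dist E u v = ereal (real (length ys - 1))"
    unfolding graph_dist_def
  proof (rule antisym)
    show "(INF xs\<in>?S. ereal (real (length xs - 1))) \<le> ereal (real (length ys - 1))"
      by (rule INF_lower[OF ys])
    show "ereal (real (length ys - 1)) \<le> (INF xs\<in>?S. ereal (real (length xs - 1)))"
      using shortest by (intro INF_greatest) (simp add: diff_le_mono)
  qed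
  with ys that show ?thesis
    by blast
qed

lemma is_spanner_if_edges_reachable:
  assumes "EH \<subseteq> E" and "0 < t" and "real B \<le> t"
    and edge: "\<And>x y. {x, y} \<in> E \<Longrightarrow> reachable_within EH B x y"
  shows "is_spanner t V E EH"
  unfolding is_spanner_def
proof (intro conjI ballI)
  fix u v
  show "graph_dist EH u v \<le> ereal t * graph_dist E u v"
  proof (cases "graph_dist E u v = \<infinity>")
    case True
    then show ?thesis
      using \<open>0 < t\<close> by simp
  next
    case False
    then obtain ys where ys: "is_walk E ys" "hd ys = u" "last ys = v"
      "graph_dist E u v = ereal (real (length ys - 1))"
      by (rule graph_dist_attained)
    have "graph_dist EH u v \<le> ereal (real (B * (length ys - 1)))"
      using reachable_within_lift[OF edge ys(1)] ys(2,3) by (intro graph_dist_le_reachable) simp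
    also have "\<dots> \<le> ereal (t * real (length ys - 1))"
      using \<open>real B \<le> t\<close> by (simp add: mult_right_mono)
    also have "\<dots> = ereal t * graph_dist E u v"
      using ys(4) by simp
    finally show ?thesis .
  qed
qed (rule assms(1))

section \<open>The level gap across an edge of G\<close>

lemma level_gap_arith:
  fixes eps m K T :: real
  assumes "eps \<le> 1/18" and "0 \<le> m" and "1 \<le> T"
    and excess: "(1 - eps) * m\<^sup>2 - (1 + eps) * m \<le> 4 * eps * T ^ 4"
    and "K \<le> m + 1 + 3 * T\<^sup>2"
  shows "K \<le> 9 * T\<^sup>2"
proof -
  have "eps * (m\<^sup>2 + m) \<le> 1/18 * (m\<^sup>2 + m)"
    using assms(1,2) by (intro mult_right_mono) auto
  moreover have "4 * eps * T ^ 4 \<le> 4 * (1/18) * T ^ 4"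
    using assms(1) by (intro mult_right_mono) auto
  ultimately have bound: "17 * m\<^sup>2 - 19 * m \<le> 4 * T ^ 4"
    using excess by (simp add: algebra_simps)
  have "m \<le> T\<^sup>2 + 2"
  proof (rule ccontr)
    assume "\<not> m \<le> T\<^sup>2 + 2"
    then have "T\<^sup>2 + 2 < m" and "0 < m"
      using zero_le_power2[of T] by linarith+
    then have "(T\<^sup>2 + 2) * (17 * T\<^sup>2 + 15) < m * (17 * m - 19)"
      by (intro mult_strict_mono) auto
    moreover have "(T\<^sup>2 + 2) * (17 * T\<^sup>2 + 15) = 17 * T ^ 4 + 49 * T\<^sup>2 + 30"
      by (simp add: algebra_simps power2_eq_square power4_eq_xxxx)
    moreover have "m * (17 * m - 19) = 17 * m\<^sup>2 - 19 * m"
      by (simp add: algebra_simps power2_eq_square)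
    moreover have "0 \<le> T ^ 4"
      by simp
    ultimately show False
      using bound zero_le_power2[of T] by linarith
  qed
  moreover have "1 \<le> T\<^sup>2"
    using assms(3) by (simp add: one_le_power)
  ultimately show ?thesis
    using assms(5) by linarith
qed

lemma sparsifier_level_gap:
  assumes G: "simple_graph V E" and H: "spectral_sparsifier eps V E EH w"
    and eps: "0 \<le> eps" "eps \<le> 1/18"
    and lipschitz: "\<And>a b. {a, b} \<in> EH \<Longrightarrow> l b \<le> l a + 1"
    and uv: "{u, v} \<in> E" and "l u = 0" and "K \<le> l v"
  shows "real K \<le> 9 * real (card V) powr (2/3)"
proof -
  have "finite V" and E: "\<forall>e\<in>E. e \<subseteq> V \<and> card e = 2"
    using G unfolding simple_graph_def by auto
  then have "finite E"
    by (intro finite_subset[of E "Pow V"]) auto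
  define n where "n = real (card V)"
  (* T = n^(1/3) balances the 2nT edges with a single cut against the n/T heavy levels. *)
  define T where "T = n powr (1/3)"
  define J where "J = nonisolated (light_cuts V l T K)"
  have "u \<in> V"
    using E uv by blast
  then have "1 \<le> n"
    using \<open>finite V\<close> unfolding n_def by (auto simp: Suc_le_eq card_gt_0_iff)
  then have "1 \<le> T" and T2: "T\<^sup>2 = n powr (2/3)" and T3: "T ^ 3 = n"
    unfolding T_def by (simp_all add: ge_one_powr_ge_zero powr_power)
  have nT: "n * T = T ^ 4"
    unfolding T3[symmetric] by (simp add: power3_eq_cube power4_eq_xxxx)
  have n_div_T: "n / T = T\<^sup>2"
    unfolding T3[symmetric] using \<open>1 \<le> T\<close> by (simp add: power2_eq_square power3_eq_cube)
  have light: "real (card {a\<in>V. l a = j}) \<le> T" "real (card {a\<in>V. l a = Suc j}) \<le> T"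
    if "j \<in> J" for j
    using that nonisolated_subset unfolding J_def light_cuts_def by blast+
  have neighbour: "Suc j \<in> J \<or> (0 < j \<and> j - 1 \<in> J)" if "j \<in> J" for j
    using that unfolding J_def by (rule nonisolated_neighbour)
  have "J \<subseteq> {..<K}"
    unfolding J_def light_cuts_def using nonisolated_subset by blast
  then have "finite J"
    using finite_subset by blast
  have "{j\<in>J. l u \<le> j \<and> j < l v} = J"
    using \<open>J \<subseteq> {..<K}\<close> \<open>l u = 0\<close> \<open>K \<le> l v\<close> by auto
  then have "cut_count l J {u, v} = card J"
    using cut_count_doubleton[of l u v J] \<open>l u = 0\<close> by simp
  moreover have "(1 - eps) * (\<Sum>e\<in>E. (real (cut_count l J e))\<^sup>2) \<le> (1 + eps) * (\<Sum>e\<in>E. real (cut_count l J e))"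
    using eps by (intro sparsifier_cut_count_inequality[OF G H _ _ \<open>finite J\<close> lipschitz]) auto
  ultimately have "(1 - eps) * (real (card J))\<^sup>2 - (1 + eps) * real (card J)
      \<le> 2 * eps * real (card {e\<in>E. cut_count l J e = 1})"
    using quadratic_excess_bound[OF \<open>finite E\<close> uv eps(1), of "cut_count l J"] eps(2) by simp
  also have "\<dots> \<le> 2 * eps * (2 * n * T)"
    using card_single_cut_edges[OF \<open>finite V\<close> E _ neighbour light] \<open>1 \<le> T\<close> eps(1)
    unfolding n_def by (intro mult_left_mono) auto
  also have "\<dots> = 4 * eps * T ^ 4"
    using nT by simp
  moreover have "real K \<le> real (card J) + 1 + 3 * T\<^sup>2"
    using card_nonisolated_light_cuts[OF \<open>finite V\<close>, of T K l] \<open>1 \<le> T\<close> n_div_T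
    unfolding J_def n_def by simp
  ultimately have "real K \<le> 9 * T\<^sup>2"
    using eps(2) \<open>1 \<le> T\<close> by (intro level_gap_arith) auto
  then show ?thesis
    unfolding T2 n_def .
qed

lemma sparsifier_edge_reachable:
  assumes G: "simple_graph V E" and H: "spectral_sparsifier eps V E EH w"
    and eps: "0 \<le> eps" "eps \<le> 1/18"
    and xy: "{x, y} \<in> E" and B: "9 * real (card V) powr (2/3) < real (Suc B)"
  shows "reachable_within EH B x y"
proof -
  let ?l = "capped_level EH x (Suc B)"
  have "real (Suc B) \<le> 9 * real (card V) powr (2/3)" if "Suc B \<le> ?l y"
    using eps capped_level_lipschitz xy capped_level_self that
    by (rule sparsifier_level_gap[OF G H, where l = ?l])
  then have "?l y < Suc B"
    using B by fastforce
  then have "reachable_within EH (?l y) x y"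
    by (rule capped_level_reachable)
  then show ?thesis
    by (rule reachable_within_mono) (use \<open>?l y < Suc B\<close> in simp)
qed

lemma sparsifier_is_spanner:
  assumes G: "simple_graph V E" and H: "spectral_sparsifier eps V E EH w"
    and eps: "0 \<le> eps" "eps \<le> 1/18"
  shows "is_spanner (9 * real (card V) powr (2/3)) V E EH"
proof (cases "V = {}")
  case True
  then show ?thesis
    using H unfolding is_spanner_def spectral_sparsifier_def by simp
next
  case False
  let ?t = "9 * real (card V) powr (2/3)"
  have "0 < ?t"
    using G False unfolding simple_graph_def by (simp add: card_gt_0_iff)
  have "EH \<subseteq> E"
    using H unfolding spectral_sparsifier_def by blast
  define B where "B = nat \<lfloor>?t\<rfloor>"
  have "real B \<le> ?t" and B: "?t < real (Suc B)"
    unfolding B_def using \<open>0 < ?t\<close> by linarith+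
  show ?thesis
    using \<open>EH \<subseteq> E\<close> \<open>0 < ?t\<close> \<open>real B \<le> ?t\<close>
  proof (rule is_spanner_if_edges_reachable)
    show "reachable_within EH B x y" if "{x, y} \<in> E" for x y
      using that B by (rule sparsifier_edge_reachable[OF G H eps])
  qed
qed

theorem theorem1p1:
  shows "\<exists>(C::real) (k::nat). C > 0 \<and>
    (\<forall>(V::'a set) E EH w (eps::real).
       simple_graph V E \<and> 0 < eps \<and> eps \<le> 1/18 \<and> spectral_sparsifier eps V E EH w \<longrightarrow>
       is_spanner (C * real (card V) powr (2/3) * (ln (real (card V) + 2)) ^ k) V E EH)"
proof (rule exI[of _ 9], rule exI[of _ 0], intro conjI allI impI)
  fix V :: "'a set" and E EH w and eps :: real
  assume "simple_graph V E \<and> 0 < eps \<and> eps \<le> 1/18 \<and> spectral_sparsifier eps V E EH w"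
  then show "is_spanner (9 * real (card V) powr (2/3) * (ln (real (card V) + 2)) ^ 0) V E EH"
    using sparsifier_is_spanner[of V E eps EH w] by simp
qed simp

end
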